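(* Let $\mathcal A=(Q,\Sigma,\delta,\rho)$ be a connected bireversible Mealy automaton whose labeled orbit tree $\mathfrak t(\mathcal A)$ has no active self-liftable branch, and let $\mathfrak j$ be a jungle tree. For all stems $\mathbf u,\mathbf v$ of $\mathfrak j$, if $\mathbf u\wedge\mathbf v$ then $\mathbf u\sim\mathbf v$.
   Context: Mealy automata. A Mealy automaton is $\mathcal A=(Q,\Sigma,\delta,\rho)$ with $Q,\Sigma$ finite non-empty sets, $\delta=(\delta_i\colon Q\to Q)_{i\in\Sigma}$, $\rho=(\rho_x\colon\Sigma\to\Sigma)_{x\in Q}$; transitions $x\xrightarrow{i\mid\rho_x(i)}\delta_i(x)$. Invertible: each $\rho_x$ a permutation of $\Sigma$; reversible: each $\delta_i$ a permutation of $Q$; bireversible: invertible, reversible, and for each $j\in\Sigma$ the map $x\mapsto\delta_{\rho_x^{-1}(j)}(x)$ is a permutation of $Q$. Connected: the directed graph on $Q$ with edges $x\to\delta_i(x)$ is connected. Extensions: $\rho_x(i\mathbf s)=\rho_x(i)\rho_{\delta_i(x)}(\mathbf s)$; $\rho_{x_1\cdots x_m}=\rho_{x_m}\circ\cdots\circ\rho_{x_1}$; $\delta_i(x\mathbf u)=\delta_i(x)\delta_{\rho_x(i)}(\mathbf u)$ on $Q^*$, $\delta_{i_1\cdots i_m}=\delta_{i_m}\circ\cdots\circ\delta_{i_1}$. The connected components of $\mathcal A^n$ (stateset $Q^n$, transitions $\mathbf u\xrightarrow{i\mid\rho_{\mathbf u}(i)}\delta_i(\mathbf u)$) are, for reversible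 $\mathcal A$, the orbits of $Q^n$ under the maps $\delta_{\mathbf s}$. Orbit tree $\mathfrak t(\mathcal A)$: vertices at level $n\ge0$ are the connected components of $\mathcal A^n$; an edge from the component of $\mathbf u\in Q^n$ to that of $\mathbf ux$ for all $\mathbf u,x$; edge $C\to D$ labeled $\#D/\#C$. $\top,\bot$ = first/last vertex of a downward path; level of an edge/path = level of its top vertex. A word of $Q^*\cup Q^\omega$ represents the initial path through the components of its prefixes. Edge $e$ is liftable to $f$ if every word of $\bot(e)$ has a suffix in $\bot(f)$; paths are liftable if corresponding edges are. $f$ is a legitimate child of $e$ if $\top(f)=\bot(e)$ and $f$ is liftable to $e$. A path/subtree $\mathfrak s$ is $k$-self-liftable if for all $i\ge0$ every path in $\mathfrak s$ starting at level $i+k$ is liftable to a path in $\mathfrak s$ starting at level $i$; self-liftable if $k$-self-liftable for some $k>0$. A branch (infinite initial path) is active if its labels are not eventually all $1$. Jungle trees: for a finite 1-self-liftable initial path $\mathbf e$ of length $n$ whose last edge has at least two legitimate children, all labeled $1$, $\mathfrak j(\mathbf e)$ consists of $\mathbf e$ plus all edges descending from $\bot(\mathbf e)$ that are liftable to the last edge of $\mathbf e$. Stems: the words of $\bot(\mathbf e)\subseteq Q^n$. A $\mathfrak j$-word is a word representing an initial path of $\mathfrak j$. For stems $\mathbf u,\mathbf v$: $\mathbf u\sim\mathbf v$ iff there is $\mathbf s\in Q^*$ such that $\mathbf{usv}$ is a $\mathfrak j$-word and $\rho_{\mathbf{us}}$ is the identity of $\Sigma^*$. Write $\mathbf u\wedge_0\mathbf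 v$ if there is a stem $\mathbf s$ such that both $\mathbf{su}$ and $\mathbf{sv}$ are $\mathfrak j$-words; $\wedge$ is the transitive closure of $\wedge_0$. *)

theory Defs
  imports Complex_Main
begin

text \<open>Mealy automaton with finite nonempty state type 'q (Q = UNIV) and
alphabet type 'a (Sigma = UNIV).  The transition functions are
d i x = delta_i(x) and the output functions are r x i = rho_x(i).\<close>

definition invertible :: "('q::finite \<Rightarrow> 'a::finite \<Rightarrow> 'a) \<Rightarrow> bool" where
  "invertible r \<longleftrightarrow> (\<forall>x. bij (r x))"

definition reversible :: "('a::finite \<Rightarrow> 'q::finite \<Rightarrow> 'q) \<Rightarrow> bool" where
  "reversible d \<longleftrightarrow> (\<forall>i. bij (d i))"

definition bireversible ::
  "('a::finite \<Rightarrow> 'q::finite \<Rightarrow> 'q) \<Rightarrow> ('q \<Rightarrow> 'a \<Rightarrow> 'a) \<Rightarrow> bool" where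
  "bireversible d r \<longleftrightarrow> invertible r \<and> reversible d \<and>
     (\<forall>j. bij (\<lambda>x. d (inv (r x) j) x))"

definition aut_connected :: "('a::finite \<Rightarrow> 'q::finite \<Rightarrow> 'q) \<Rightarrow> bool" where
  "aut_connected d \<longleftrightarrow>
     (let E = {(x, d i x) | x i. True} in \<forall>x y. (x, y) \<in> (E \<union> E\<inverse>)\<^sup>*)"

text \<open>Extensions: rho_x on Sigma^*, rho on Q^*, delta_i on Q^*.\<close>

fun rho1 :: "('a \<Rightarrow> 'q \<Rightarrow> 'q) \<Rightarrow> ('q \<Rightarrow> 'a \<Rightarrow> 'a) \<Rightarrow> 'q \<Rightarrow> 'a list \<Rightarrow> 'a list" where
  "rho1 d r x [] = []"
| "rho1 d r x (i # s) = r x i # rho1 d r (d i x) s"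

text \<open>rho_{x1...xm} = rho_{xm} o ... o rho_{x1}\<close>
fun rhoW :: "('a \<Rightarrow> 'q \<Rightarrow> 'q) \<Rightarrow> ('q \<Rightarrow> 'a \<Rightarrow> 'a) \<Rightarrow> 'q list \<Rightarrow> 'a list \<Rightarrow> 'a list" where
  "rhoW d r [] s = s"
| "rhoW d r (x # u) s = rhoW d r u (rho1 d r x s)"

fun deltaW1 :: "('a \<Rightarrow> 'q \<Rightarrow> 'q) \<Rightarrow> ('q \<Rightarrow> 'a \<Rightarrow> 'a) \<Rightarrow> 'a \<Rightarrow> 'q list \<Rightarrow> 'q list" where
  "deltaW1 d r i [] = []"
| "deltaW1 d r i (x # u) = d i x # deltaW1 d r (r x i) u"

text \<open>Connected component of u in A^n (n = length u): weak connectivity in the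
graph with edges w -> delta_i(w).  Vertices of the orbit tree are such components.\<close>

definition comp :: "('a \<Rightarrow> 'q \<Rightarrow> 'q) \<Rightarrow> ('q \<Rightarrow> 'a \<Rightarrow> 'a) \<Rightarrow> 'q list \<Rightarrow> 'q list set" where
  "comp d r u =
     (let E = {(w, deltaW1 d r i w) | w i. True} in {v. (u, v) \<in> (E \<union> E\<inverse>)\<^sup>*})"

type_synonym 'q vertex = "'q list set"
type_synonym 'q edge = "'q list set \<times> 'q list set"

definition root :: "'q vertex" where
  "root = {[]}"

text \<open>Edges of the orbit tree: (top, bottom).\<close>
definition is_edge :: "('a \<Rightarrow> 'q \<Rightarrow> 'q) \<Rightarrow> ('q \<Rightarrow> 'a \<Rightarrow> 'a) \<Rightarrow> 'q edge \<Rightarrow> bool" where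
  "is_edge d r e \<longleftrightarrow> (\<exists>u x. e = (comp d r u, comp d r (u @ [x])))"

definition vlevel :: "'q vertex \<Rightarrow> nat" where
  "vlevel C = length (SOME w. w \<in> C)"

definition elevel :: "'q edge \<Rightarrow> nat" where
  "elevel e = vlevel (fst e)"

definition label :: "'q edge \<Rightarrow> real" where
  "label e = real (card (snd e)) / real (card (fst e))"

definition liftable :: "'q edge \<Rightarrow> 'q edge \<Rightarrow> bool" where
  "liftable e f \<longleftrightarrow> (\<forall>w \<in> snd e. \<exists>s t. w = s @ t \<and> t \<in> snd f)"

definition is_path :: "('a \<Rightarrow> 'q \<Rightarrow> 'q) \<Rightarrow> ('q \<Rightarrow> 'a \<Rightarrow> 'a) \<Rightarrow> 'q edge list \<Rightarrow> bool" where
  "is_path d r p \<longleftrightarrow> (\<forall>e \<in> set p. is_edge d r e) \<and>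
     (\<forall>j. Suc j < length p \<longrightarrow> snd (p ! j) = fst (p ! Suc j))"

definition path_in ::
  "('a \<Rightarrow> 'q \<Rightarrow> 'q) \<Rightarrow> ('q \<Rightarrow> 'a \<Rightarrow> 'a) \<Rightarrow> 'q edge set \<Rightarrow> 'q edge list \<Rightarrow> bool" where
  "path_in d r S p \<longleftrightarrow> is_path d r p \<and> set p \<subseteq> S"

definition initial_path :: "('a \<Rightarrow> 'q \<Rightarrow> 'q) \<Rightarrow> ('q \<Rightarrow> 'a \<Rightarrow> 'a) \<Rightarrow> 'q edge list \<Rightarrow> bool" where
  "initial_path d r p \<longleftrightarrow> is_path d r p \<and> (p \<noteq> [] \<longrightarrow> fst (hd p) = root)"

definition self_liftable_k ::
  "('a \<Rightarrow> 'q \<Rightarrow> 'q) \<Rightarrow> ('q \<Rightarrow> 'a \<Rightarrow> 'a) \<Rightarrow> nat \<Rightarrow> 'q edge set \<Rightarrow> bool" where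
  "self_liftable_k d r k S \<longleftrightarrow>
     (\<forall>i p. path_in d r S p \<and> p \<noteq> [] \<and> elevel (hd p) = i + k \<longrightarrow>
        (\<exists>q. path_in d r S q \<and> q \<noteq> [] \<and> elevel (hd q) = i \<and> list_all2 liftable p q))"

definition self_liftable ::
  "('a \<Rightarrow> 'q \<Rightarrow> 'q) \<Rightarrow> ('q \<Rightarrow> 'a \<Rightarrow> 'a) \<Rightarrow> 'q edge set \<Rightarrow> bool" where
  "self_liftable d r S \<longleftrightarrow> (\<exists>k>0. self_liftable_k d r k S)"

definition is_branch :: "('a \<Rightarrow> 'q \<Rightarrow> 'q) \<Rightarrow> ('q \<Rightarrow> 'a \<Rightarrow> 'a) \<Rightarrow> (nat \<Rightarrow> 'q edge) \<Rightarrow> bool" where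
  "is_branch d r B \<longleftrightarrow> fst (B 0) = root \<and> (\<forall>n. is_edge d r (B n)) \<and>
     (\<forall>n. snd (B n) = fst (B (Suc n)))"

definition active :: "(nat \<Rightarrow> 'q edge) \<Rightarrow> bool" where
  "active B \<longleftrightarrow> \<not> (\<exists>N. \<forall>n\<ge>N. label (B n) = 1)"

definition legit_child ::
  "('a \<Rightarrow> 'q \<Rightarrow> 'q) \<Rightarrow> ('q \<Rightarrow> 'a \<Rightarrow> 'a) \<Rightarrow> 'q edge \<Rightarrow> 'q edge \<Rightarrow> bool" where
  "legit_child d r e f \<longleftrightarrow> is_edge d r f \<and> fst f = snd e \<and> liftable f e"

definition jungle_path ::
  "('a \<Rightarrow> 'q \<Rightarrow> 'q) \<Rightarrow> ('q \<Rightarrow> 'a \<Rightarrow> 'a) \<Rightarrow> 'q edge list \<Rightarrow> bool" where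
  "jungle_path d r e \<longleftrightarrow> initial_path d r e \<and> e \<noteq> [] \<and> self_liftable_k d r 1 (set e) \<and>
     (\<exists>f1 f2. f1 \<noteq> f2 \<and> legit_child d r (last e) f1 \<and> legit_child d r (last e) f2) \<and>
     (\<forall>f. legit_child d r (last e) f \<longrightarrow> label f = 1)"

definition descends ::
  "('a \<Rightarrow> 'q \<Rightarrow> 'q) \<Rightarrow> ('q \<Rightarrow> 'a \<Rightarrow> 'a) \<Rightarrow> 'q vertex \<Rightarrow> 'q vertex \<Rightarrow> bool" where
  "descends d r C D \<longleftrightarrow> (C, D) \<in> {e. is_edge d r e}\<^sup>*"

definition jungle_tree ::
  "('a \<Rightarrow> 'q \<Rightarrow> 'q) \<Rightarrow> ('q \<Rightarrow> 'a \<Rightarrow> 'a) \<Rightarrow> 'q edge list \<Rightarrow> 'q edge set" where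
  "jungle_tree d r e = set e \<union>
     {f. is_edge d r f \<and> descends d r (snd (last e)) (fst f) \<and> liftable f (last e)}"

definition stems :: "'q edge list \<Rightarrow> 'q list set" where
  "stems e = snd (last e)"

definition rep_path ::
  "('a \<Rightarrow> 'q \<Rightarrow> 'q) \<Rightarrow> ('q \<Rightarrow> 'a \<Rightarrow> 'a) \<Rightarrow> 'q list \<Rightarrow> 'q edge list" where
  "rep_path d r w =
     map (\<lambda>k. (comp d r (take k w), comp d r (take (Suc k) w))) [0..<length w]"

definition jword ::
  "('a \<Rightarrow> 'q \<Rightarrow> 'q) \<Rightarrow> ('q \<Rightarrow> 'a \<Rightarrow> 'a) \<Rightarrow> 'q edge list \<Rightarrow> 'q list \<Rightarrow> bool" where
  "jword d r e w \<longleftrightarrow> set (rep_path d r w) \<subseteq> jungle_tree d r e"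

definition jsim ::
  "('a \<Rightarrow> 'q \<Rightarrow> 'q) \<Rightarrow> ('q \<Rightarrow> 'a \<Rightarrow> 'a) \<Rightarrow> 'q edge list \<Rightarrow> 'q list \<Rightarrow> 'q list \<Rightarrow> bool" where
  "jsim d r e u v \<longleftrightarrow>
     (\<exists>s. jword d r e (u @ s @ v) \<and> (\<forall>t. rhoW d r (u @ s) t = t))"

definition jwedge0 ::
  "('a \<Rightarrow> 'q \<Rightarrow> 'q) \<Rightarrow> ('q \<Rightarrow> 'a \<Rightarrow> 'a) \<Rightarrow> 'q edge list \<Rightarrow> 'q list \<Rightarrow> 'q list \<Rightarrow> bool" where
  "jwedge0 d r e u v \<longleftrightarrow> u \<in> stems e \<and> v \<in> stems e \<and>
     (\<exists>s \<in> stems e. jword d r e (s @ u) \<and> jword d r e (s @ v))"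

definition jwedge ::
  "('a \<Rightarrow> 'q \<Rightarrow> 'q) \<Rightarrow> ('q \<Rightarrow> 'a \<Rightarrow> 'a) \<Rightarrow> 'q edge list \<Rightarrow> 'q list \<Rightarrow> 'q list \<Rightarrow> bool" where
  "jwedge d r e = (jwedge0 d r e)\<^sup>+\<^sup>+"

end

theory Submission
  imports Defs "HOL-Library.Stream"
begin

text \<open>Call a word a walk between stems if all its factors of the stem length are stems; these
  are exactly the words of the jungle tree. Walks compose, and they can be reversed: a one-letter
  step between stems lies in a component labelled 1, in which the steps form a permutation of the
  stems. If u and v have a common stem s in front of them, there is therefore a closed walk L at
  u which also leads to v. The branch of the periodic word L L L ... is self-liftable, hence
  inactive by hypothesis; once its labels are 1, the action of a long prefix is determined by a
  bounded prefix and a finite table of output letters, so some power of L acts trivially, and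
  this power followed into v witnesses u \<sim> v. Transitivity of \<sim> takes care of the closure \<wedge>.\<close>

section \<open>Finite permutations and relations\<close>

lemma nat_seq_finite_range_repeats:
  assumes "finite (range g)"
  obtains i j :: nat where "i < j" "g i = g j"
proof -
  have "\<not> inj g" using assms finite_imageD infinite_UNIV_nat by blast
  then obtain i j where "i \<noteq> j" "g i = g j" unfolding inj_def by blast
  then show ?thesis using that by (cases "i < j") (auto simp: not_less_iff_gr_or_eq)
qed

lemma bij_betw_funpow_return:
  assumes "bij_betw f S S" "finite S" "x \<in> S"
  obtains p where "p > 0" "(f ^^ p) x = x"
proof -
  have in_S: "(f ^^ k) x \<in> S" for k
    using bij_betw_funpow[OF assms(1)] assms(3) by (auto dest: bij_betwE)
  then have "range (\<lambda>k. (f ^^ k) x) \<subseteq> S" by blast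
  then obtain i j where ij: "i < j" "(f ^^ i) x = (f ^^ j) x"
    using nat_seq_finite_range_repeats finite_subset assms(2) by metis
  have "(f ^^ i) ((f ^^ (j - i)) x) = (f ^^ (i + (j - i))) x"
    by (simp add: funpow_add)
  then have "(f ^^ i) ((f ^^ (j - i)) x) = (f ^^ i) x"
    using ij by simp
  then have "(f ^^ (j - i)) x = x"
    using bij_betw_imp_inj_on[OF bij_betw_funpow[OF assms(1)]] in_S assms(3)
    by (auto dest: inj_onD)
  with ij(1) show ?thesis using that[of "j - i"] by simp
qed

text \<open>The pairs (f w, g w) form the graph of the permutation g \<circ> f\<inverse> of V; going once around
  the cycle through f z leads from g z back to f z.\<close>
lemma bij_betw_pair_graph_return:
  assumes f: "bij_betw f D V" and g: "bij_betw g D V" and "finite D" "z \<in> D"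
  shows "(g z, f z) \<in> {(f w, g w) | w. w \<in> D}\<^sup>*"
proof -
  let ?S = "{(f w, g w) | w. w \<in> D}"
  define \<pi> where "\<pi> = g \<circ> the_inv_into D f"
  have \<pi>: "bij_betw \<pi> V V"
    unfolding \<pi>_def using bij_betw_the_inv_into[OF f] g by (rule bij_betw_trans)
  have step: "(x, \<pi> x) \<in> ?S" if "x \<in> V" for x
  proof -
    have "the_inv_into D f x \<in> D" "f (the_inv_into D f x) = x"
      using that f by (auto intro: the_inv_into_into f_the_inv_into_f_bij_betw simp: bij_betw_def)
    then show ?thesis unfolding \<pi>_def by (metis (mono_tags, lifting) comp_apply mem_Collect_eq)
  qed
  have iter: "(x, (\<pi> ^^ k) x) \<in> ?S\<^sup>*" if "x \<in> V" for x k
  proof (induction k)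
    case (Suc k)
    have "(\<pi> ^^ k) x \<in> V" using bij_betw_funpow[OF \<pi>] that by (auto dest: bij_betwE)
    with Suc show ?case using step by (auto intro: rtrancl_into_rtrancl)
  qed simp
  have fz: "f z \<in> V" and \<pi>fz: "\<pi> (f z) = g z"
    using assms f by (auto simp: \<pi>_def bij_betw_def the_inv_into_f_f)
  have "finite V" using f \<open>finite D\<close> bij_betw_finite by blast
  then obtain p where "p > 0" "(\<pi> ^^ p) (f z) = f z"
    using bij_betw_funpow_return[OF \<pi> _ fz] by blast
  then have "(\<pi> ^^ Suc (p - 1)) (f z) = f z" by simp
  then have "(\<pi> ^^ (p - 1)) (g z) = f z"
    unfolding funpow_Suc_right o_apply \<pi>fz .
  moreover have "g z \<in> V" using g assms(4) by (auto dest: bij_betwE)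
  ultimately show ?thesis using iter[of "g z" "p - 1"] by simp
qed

lemma bij_betw_image_card_eq:
  assumes "f ` A = B" "finite A" "card A = card B"
  shows "bij_betw f A B"
  using assms eq_card_imp_inj_on[of A f] unfolding bij_betw_def by simp

lemma symcl_rtrancl_map:
  assumes "\<And>x y. (x, y) \<in> E \<Longrightarrow> (f x, f y) \<in> E'" and "(x, y) \<in> (E \<union> E\<inverse>)\<^sup>*"
  shows "(f x, f y) \<in> (E' \<union> E'\<inverse>)\<^sup>*"
  using assms(2)
proof (induction rule: rtrancl_induct)
  case (step y z)
  then have "(f y, f z) \<in> E' \<union> E'\<inverse>" using assms(1) by blast
  with step.IH show ?case by (rule rtrancl_into_rtrancl)
qed simp

section \<open>Action of words\<close>

lemma length_deltaW1 [simp]: "length (deltaW1 d r i w) = length w"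
  by (induction w arbitrary: i) auto

lemma length_rho1 [simp]: "length (rho1 d r x s) = length s"
  by (induction s arbitrary: x) auto

lemma length_rhoW [simp]: "length (rhoW d r u s) = length s"
  by (induction u arbitrary: s) auto

lemma rhoW_Nil [simp]: "rhoW d r u [] = []"
  by (induction u) auto

lemma rhoW_append: "rhoW d r (u @ v) t = rhoW d r v (rhoW d r u t)"
  by (induction u arbitrary: t) auto

definition out_letter ::
  "('a \<Rightarrow> 'q \<Rightarrow> 'q) \<Rightarrow> ('q \<Rightarrow> 'a \<Rightarrow> 'a) \<Rightarrow> 'q list \<Rightarrow> 'a \<Rightarrow> 'a" where
  "out_letter d r u i = hd (rhoW d r u [i])"

lemma rhoW_singleton: "rhoW d r u [i] = [out_letter d r u i]"
  using length_rhoW[of d r u "[i]"] unfolding out_letter_def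
  by (cases "rhoW d r u [i]") auto

lemma out_letter_Cons: "out_letter d r (x # u) i = out_letter d r u (r x i)"
  by (simp add: out_letter_def)

lemma rhoW_Cons: "rhoW d r u (i # t) = out_letter d r u i # rhoW d r (deltaW1 d r i u) t"
proof (induction u arbitrary: i t)
  case (Cons x u)
  have "rhoW d r (x # u) (i # t) = rhoW d r u (r x i # rho1 d r (d i x) t)" by simp
  also have "\<dots> = out_letter d r u (r x i) # rhoW d r (deltaW1 d r (r x i) u) (rho1 d r (d i x) t)"
    by (rule Cons.IH)
  finally show ?case by (simp add: out_letter_Cons)
qed (simp add: out_letter_def)

lemma deltaW1_append:
  "deltaW1 d r i (u @ v) = deltaW1 d r i u @ deltaW1 d r (out_letter d r u i) v"
  by (induction u arbitrary: i) (auto simp: out_letter_def)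

lemma deltaW1_take_drop:
  "deltaW1 d r i u = deltaW1 d r i (take k u) @ deltaW1 d r (out_letter d r (take k u) i) (drop k u)"
  using deltaW1_append[of d r i "take k u" "drop k u"] by simp

lemma take_deltaW1: "take k (deltaW1 d r i u) = deltaW1 d r i (take k u)"
  by (subst deltaW1_take_drop[of _ _ _ _ k]) (simp add: min_def)

lemma drop_deltaW1: "drop k (deltaW1 d r i u) = deltaW1 d r (out_letter d r (take k u) i) (drop k u)"
  by (subst deltaW1_take_drop[of _ _ _ _ k]) (simp add: min_def)

lemma inj_deltaW1:
  assumes "reversible d" shows "inj (deltaW1 d r i)"
proof (rule injI)
  fix u v show "deltaW1 d r i u = deltaW1 d r i v \<Longrightarrow> u = v"
  proof (induction u arbitrary: i v)
    case (Cons x u)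
    then obtain y v' where "v = y # v'" "d i x = d i y" by (cases v) auto
    moreover have "inj (d i)" using assms bij_is_inj unfolding reversible_def by blast
    ultimately show ?case using Cons by (auto dest: injD)
  qed (metis length_0_conv length_deltaW1)
qed

lemma inj_rho1:
  assumes "invertible r" shows "inj (rho1 d r x)"
proof (rule injI)
  fix s t show "rho1 d r x s = rho1 d r x t \<Longrightarrow> s = t"
  proof (induction s arbitrary: x t)
    case (Cons i s)
    then obtain j t' where "t = j # t'" "r x i = r x j" by (cases t) auto
    moreover have "inj (r x)" using assms bij_is_inj unfolding invertible_def by blast
    ultimately show ?case using Cons by (auto dest: injD)
  qed (metis length_0_conv length_rho1)
qed

lemma inj_rhoW:
  assumes "invertible r" shows "inj (rhoW d r u)"
proof (induction u)
  case (Cons x u)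
  have "rhoW d r (x # u) = rhoW d r u \<circ> rho1 d r x" by auto
  then show ?case using Cons inj_rho1[OF assms] by (metis inj_compose)
qed (simp add: inj_on_def)

lemma surj_out_letter:
  assumes "invertible r" shows "surj (out_letter d r u)"
proof -
  have "inj (out_letter d r u)"
  proof (rule injI)
    fix i j assume "out_letter d r u i = out_letter d r u j"
    then have "rhoW d r u [i] = rhoW d r u [j]" by (simp only: rhoW_singleton)
    then show "i = j" using inj_rhoW[OF assms] by (auto dest: injD)
  qed
  then show ?thesis by (rule finite_UNIV_inj_surj[OF finite_UNIV])
qed

section \<open>Orbits of words\<close>

definition orbit_edges ::
  "('a \<Rightarrow> 'q \<Rightarrow> 'q) \<Rightarrow> ('q \<Rightarrow> 'a \<Rightarrow> 'a) \<Rightarrow> ('q list \<times> 'q list) set" where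
  "orbit_edges d r = {(w, deltaW1 d r i w) | w i. True}"

lemma comp_orbit_edges: "comp d r u = {v. (u, v) \<in> (orbit_edges d r \<union> (orbit_edges d r)\<inverse>)\<^sup>*}"
  by (simp add: comp_def orbit_edges_def Let_def)

lemma comp_self: "u \<in> comp d r u"
  by (simp add: comp_orbit_edges)

lemma comp_deltaW1: "deltaW1 d r i u \<in> comp d r u"
  unfolding comp_orbit_edges orbit_edges_def by blast

lemma comp_eq:
  assumes "v \<in> comp d r u" shows "comp d r v = comp d r u"
proof -
  let ?R = "(orbit_edges d r \<union> (orbit_edges d r)\<inverse>)\<^sup>*"
  have "sym ?R" by (simp add: sym_Un_converse sym_rtrancl)
  then have "(v, u) \<in> ?R" using assms unfolding comp_orbit_edges by (auto dest: symD)
  with assms show ?thesis unfolding comp_orbit_edges by (auto intro: rtrancl_trans)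
qed

lemma comp_length: "v \<in> comp d r u \<Longrightarrow> length v = length u"
  unfolding comp_orbit_edges mem_Collect_eq
  by (induction rule: rtrancl_induct) (auto simp: orbit_edges_def)

lemma comp_finite: "finite (comp d r (u :: 'q::finite list))"
  using finite_lists_length_eq[of "UNIV :: 'q set" "length u"]
  by (rule finite_subset[rotated]) (auto dest: comp_length)

lemma comp_Nil: "comp d r [] = root"
  unfolding root_def using comp_length[of _ d r "[]"] comp_self[of "[]" d r] by auto

lemma vlevel_comp: "vlevel (comp d r u) = length u"
  unfolding vlevel_def using someI[of "\<lambda>x. x \<in> comp d r u", OF comp_self] comp_length by blast

lemma comp_take:
  assumes "z \<in> comp d r (u @ v)" shows "take (length u) z \<in> comp d r u"
proof -
  have "(take (length u) x, take (length u) y) \<in> orbit_edges d r" if "(x, y) \<in> orbit_edges d r" for x y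
    using that unfolding orbit_edges_def by (auto simp: take_deltaW1)
  with assms show ?thesis
    using symcl_rtrancl_map[where E="orbit_edges d r" and E'="orbit_edges d r" and f="take (length u)"]
    unfolding comp_orbit_edges by fastforce
qed

lemma comp_drop:
  assumes "z \<in> comp d r (u @ v)" shows "drop (length u) z \<in> comp d r v"
proof -
  have "(drop (length u) x, drop (length u) y) \<in> orbit_edges d r" if "(x, y) \<in> orbit_edges d r" for x y
    using that unfolding orbit_edges_def by (auto simp: drop_deltaW1)
  with assms show ?thesis
    using symcl_rtrancl_map[where E="orbit_edges d r" and E'="orbit_edges d r" and f="drop (length u)"]
    unfolding comp_orbit_edges by fastforce
qed

lemma orbit_edges_funpow: "(u, (deltaW1 d r i ^^ k) u) \<in> (orbit_edges d r)\<^sup>*"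
proof (induction k)
  case (Suc k)
  have "((deltaW1 d r i ^^ k) u, (deltaW1 d r i ^^ Suc k) u) \<in> orbit_edges d r"
    unfolding orbit_edges_def by auto
  with Suc show ?case by (rule rtrancl_into_rtrancl)
qed simp

text \<open>Each \<open>deltaW1 d r i\<close> permutes the finite set of words of a given length, so an
  inverse edge is undone by going forward around a cycle.\<close>
lemma orbit_edges_converse:
  fixes u :: "'q::finite list"
  assumes "reversible d"
  shows "(deltaW1 d r i u, u) \<in> (orbit_edges d r)\<^sup>*"
proof -
  let ?f = "deltaW1 d r i" and ?S = "{w :: 'q list. length w = length u}"
  have "inj_on ?f ?S" using inj_deltaW1[OF assms] by (rule inj_on_subset) simp
  moreover have fin: "finite ?S" using finite_lists_length_eq[of "UNIV :: 'q set"] by simp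
  moreover have "?f ` ?S \<subseteq> ?S" by auto
  ultimately have "bij_betw ?f ?S ?S" unfolding bij_betw_def using endo_inj_surj by blast
  then obtain p where "p > 0" "(?f ^^ p) u = u"
    using bij_betw_funpow_return[OF _ fin] by blast
  then have "(?f ^^ Suc (p - 1)) u = u" by simp
  then have "(?f ^^ (p - 1)) (?f u) = u" unfolding funpow_Suc_right o_apply .
  then show ?thesis using orbit_edges_funpow[of "?f u" "p - 1" d r i] by simp
qed

lemma comp_eq_orbit:
  fixes u :: "'q::finite list"
  assumes "reversible d"
  shows "comp d r u = {v. (u, v) \<in> (orbit_edges d r)\<^sup>*}"
proof -
  have "(u, v) \<in> (orbit_edges d r)\<^sup>*" if "(u, v) \<in> (orbit_edges d r \<union> (orbit_edges d r)\<inverse>)\<^sup>*" for v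
    using that
  proof (induction rule: rtrancl_induct)
    case (step y z)
    have "(y, z) \<in> (orbit_edges d r)\<^sup>*"
      using step(2) orbit_edges_converse[OF assms] unfolding orbit_edges_def by auto
    with step.IH show ?case by (rule rtrancl_trans)
  qed simp
  moreover have "(orbit_edges d r)\<^sup>* \<subseteq> (orbit_edges d r \<union> (orbit_edges d r)\<inverse>)\<^sup>*"
    by (rule rtrancl_mono) blast
  ultimately show ?thesis unfolding comp_orbit_edges by blast
qed

lemma comp_closed_deltaW1: "z \<in> comp d r u \<Longrightarrow> deltaW1 d r i z \<in> comp d r u"
  using comp_deltaW1 comp_eq by metis

text \<open>By \<open>comp_eq_orbit\<close> it suffices to lift forward edges.\<close>
lemma comp_subset_image_if_edges_lift:
  fixes x :: "'q::finite list"
  assumes "reversible d" and lift: "\<And>z i. \<exists>i'. f (deltaW1 d r i' z) = deltaW1 d r i (f z)"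
  shows "comp d r (f x) \<subseteq> f ` comp d r x"
proof
  fix y assume "y \<in> comp d r (f x)"
  then have "(f x, y) \<in> (orbit_edges d r)\<^sup>*" unfolding comp_eq_orbit[OF assms(1)] by simp
  then show "y \<in> f ` comp d r x"
  proof (induction rule: rtrancl_induct)
    case base then show ?case using comp_self by blast
  next
    case (step y y')
    then obtain z where z: "z \<in> comp d r x" "f z = y" by blast
    obtain i where "y' = deltaW1 d r i y" using step(2) unfolding orbit_edges_def by auto
    then obtain i' where "f (deltaW1 d r i' z) = y'" using lift z(2) by blast
    then show ?case using comp_closed_deltaW1[OF z(1)] by blast
  qed
qed

lemma take_image_comp:
  fixes u :: "'q::finite list"
  assumes "reversible d"
  shows "take (length u) ` comp d r (u @ v) = comp d r u"
proof
  show "take (length u) ` comp d r (u @ v) \<subseteq> comp d r u" using comp_take by blast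
  show "comp d r u \<subseteq> take (length u) ` comp d r (u @ v)"
    using comp_subset_image_if_edges_lift[OF assms, where f="take (length u)" and x="u @ v" and r=r]
    by (simp add: take_deltaW1) blast
qed

lemma drop_image_comp:
  fixes u :: "'q::finite list"
  assumes "reversible d" "invertible r"
  shows "drop (length u) ` comp d r (u @ v) = comp d r v"
proof
  show "drop (length u) ` comp d r (u @ v) \<subseteq> comp d r v" using comp_drop by blast
  have "\<exists>i'. drop (length u) (deltaW1 d r i' z) = deltaW1 d r i (drop (length u) z)" for z i
    using surj_out_letter[OF assms(2), of d "take (length u) z"]
    by (metis drop_deltaW1 surjD)
  from comp_subset_image_if_edges_lift[OF assms(1) this, where x="u @ v"]
  show "comp d r v \<subseteq> drop (length u) ` comp d r (u @ v)" by simp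
qed

section \<open>Periodic branches\<close>

lemma card_eq_if_label_eq_1:
  fixes f :: "'q::finite edge"
  assumes "is_edge d r f" "label f = 1"
  shows "card (snd f) = card (fst f)"
proof -
  obtain u x where f: "f = (comp d r u, comp d r (u @ [x]))" using assms(1) unfolding is_edge_def by blast
  have "card (fst f) > 0"
    using f comp_finite[of d r u] comp_self[of u d r] by (auto simp: card_gt_0_iff)
  then show ?thesis using assms(2) by (simp add: label_def divide_eq_1_iff)
qed

definition stream_branch ::
  "('a \<Rightarrow> 'q \<Rightarrow> 'q) \<Rightarrow> ('q \<Rightarrow> 'a \<Rightarrow> 'a) \<Rightarrow> 'q stream \<Rightarrow> nat \<Rightarrow> 'q edge" where
  "stream_branch d r s n = (comp d r (stake n s), comp d r (stake (Suc n) s))"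

lemma is_branch_stream_branch: "is_branch d r (stream_branch d r s)"
  unfolding is_branch_def is_edge_def stream_branch_def
  by (metis comp_Nil stake.simps(1) stake_Suc fst_conv snd_conv)

lemma elevel_stream_branch: "elevel (stream_branch d r s n) = n"
  by (simp add: elevel_def stream_branch_def vlevel_comp)

lemma path_in_stream_branch:
  assumes "path_in d r (range (stream_branch d r s)) p" "j < length p"
  shows "p ! j = stream_branch d r s (elevel (hd p) + j)"
  using assms(2)
proof (induction j)
  case 0
  then obtain m where "hd p = stream_branch d r s m"
    using assms(1) unfolding path_in_def by (metis hd_in_set list.size(3) not_less0 rangeE subsetD)
  then show ?case using 0 by (simp add: hd_conv_nth elevel_stream_branch)
next
  case (Suc j)
  obtain m where m: "p ! Suc j = stream_branch d r s m"
    using assms(1) Suc.prems unfolding path_in_def by (meson nth_mem rangeE subsetD)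
  have "snd (p ! j) = fst (p ! Suc j)"
    using assms(1) Suc.prems unfolding path_in_def is_path_def by blast
  then have "stake m s \<in> comp d r (stake (Suc (elevel (hd p) + j)) s)"
    using Suc m comp_self by (simp add: stream_branch_def)
  then have "m = Suc (elevel (hd p) + j)" by (auto dest: comp_length)
  then show ?case using m by simp
qed

lemma card_comp_stake_eq_if_label_eq_1:
  fixes s :: "'q::finite stream"
  assumes "label (stream_branch d r s n) = 1"
  shows "card (comp d r (stake (Suc n) s)) = card (comp d r (stake n s))"
proof -
  have "is_edge d r (stream_branch d r s n)"
    using is_branch_stream_branch unfolding is_branch_def by blast
  from card_eq_if_label_eq_1[OF this assms] show ?thesis
    by (simp only: stream_branch_def fst_conv snd_conv)
qed

lemma liftable_stream_branch:
  assumes "sdrop k s = s"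
  shows "liftable (stream_branch d r s (k + m)) (stream_branch d r s m)"
  unfolding liftable_def stream_branch_def
proof
  fix z assume "z \<in> snd (comp d r (stake (k + m) s), comp d r (stake (Suc (k + m)) s))"
  moreover have "stake (Suc (k + m)) s = stake k s @ stake (Suc m) s"
    using stake_add[of k s "Suc m"] assms by simp
  ultimately have "drop k z \<in> comp d r (stake (Suc m) s)"
    using comp_drop[of z d r "stake k s"] by simp
  then show "\<exists>u v. z = u @ v \<and> v \<in> snd (comp d r (stake m s), comp d r (stake (Suc m) s))"
    by (metis append_take_drop_id snd_conv)
qed

lemma self_liftable_stream_branch:
  assumes "0 < k" "sdrop k s = s"
  shows "self_liftable d r (range (stream_branch d r s))"
  unfolding self_liftable_def
proof (intro exI conjI)
  let ?B = "stream_branch d r s"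
  show "self_liftable_k d r k (range ?B)"
    unfolding self_liftable_k_def
  proof (intro allI impI)
    fix i p assume p: "path_in d r (range ?B) p \<and> p \<noteq> [] \<and> elevel (hd p) = i + k"
    define q where "q = map (\<lambda>j. ?B (i + j)) [0..<length p]"
    have "path_in d r (range ?B) q"
      using is_branch_stream_branch[of d r s]
      unfolding path_in_def is_path_def is_branch_def q_def by auto
    moreover have "q \<noteq> []" "elevel (hd q) = i"
      using p by (auto simp: q_def hd_map elevel_stream_branch)
    moreover have "list_all2 liftable p q"
    proof (rule list_all2_all_nthI)
      fix j assume "j < length p"
      then have "p ! j = ?B (k + (i + j))" using p path_in_stream_branch[of d r s p] by (simp add: ac_simps)
      then show "liftable (p ! j) (q ! j)"
        using \<open>j < length p\<close> liftable_stream_branch[OF assms(2)] by (simp add: q_def)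
    qed (simp add: q_def)
    ultimately show "\<exists>q. path_in d r (range ?B) q \<and> q \<noteq> [] \<and> elevel (hd q) = i \<and> list_all2 liftable p q"
      by blast
  qed
qed (use assms in simp)

lemma inj_on_take_comp_stake:
  fixes s :: "'q::finite stream"
  assumes "reversible d"
    and stable: "\<forall>n\<ge>N. card (comp d r (stake (Suc n) s)) = card (comp d r (stake n s))"
    and "N \<le> m"
  shows "inj_on (take N) (comp d r (stake m s))"
  using assms(3)
proof (induction m rule: dec_induct)
  case base
  show ?case by (rule inj_onI) (metis comp_length length_stake take_all order_refl)
next
  case (step m)
  let ?O = "\<lambda>m. comp d r (stake m s)"
  have stake_snoc: "stake (Suc m) s = stake m s @ [s !! m]" by (rule stake_Suc)
  have "take m ` ?O (Suc m) = ?O m"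
    using take_image_comp[OF assms(1), where u="stake m s" and v="[s !! m]" and r=r]
    by (simp only: stake_snoc length_stake)
  moreover have "card (?O (Suc m)) = card (?O m)" using stable step.hyps by simp
  ultimately have "bij_betw (take m) (?O (Suc m)) (?O m)"
    by (intro bij_betw_image_card_eq) (simp_all add: comp_finite)
  then have "inj_on (take N \<circ> take m) (?O (Suc m))"
    using step.IH by (auto intro: comp_inj_on bij_betw_imp_inj_on simp: bij_betw_def)
  then show ?case using step.hyps by (simp add: o_def min_def)
qed

definition output_table ::
  "('a \<Rightarrow> 'q \<Rightarrow> 'q) \<Rightarrow> ('q \<Rightarrow> 'a \<Rightarrow> 'a) \<Rightarrow> nat \<Rightarrow> 'q list set \<Rightarrow> ('q list \<times> ('a \<Rightarrow> 'a)) set" where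
  "output_table d r k C = {(take k z, out_letter d r z) | z. z \<in> C}"

text \<open>By \<open>rhoW_Cons\<close>, the action of a word is determined by its output letters and those
  of its images under \<open>deltaW1\<close>.\<close>
lemma rhoW_eq_if_output_table_subset:
  assumes closed: "\<And>z i. z \<in> C \<Longrightarrow> deltaW1 d r i z \<in> C"
      "\<And>z i. z \<in> C' \<Longrightarrow> deltaW1 d r i z \<in> C'"
    and inj: "inj_on (take k) C"
    and table: "output_table d r k C' \<subseteq> output_table d r k C"
    and "z \<in> C" "z' \<in> C'" "take k z = take k z'"
  shows "rhoW d r z t = rhoW d r z' t"
  using assms(5-7)
proof (induction t arbitrary: z z')
  case (Cons i t)
  have "(take k z', out_letter d r z') \<in> output_table d r k C"
    using Cons.prems(2) table unfolding output_table_def by blast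
  then obtain y where "y \<in> C" "take k y = take k z'" "out_letter d r y = out_letter d r z'"
    by (auto simp: output_table_def)
  then have "out_letter d r z = out_letter d r z'"
    using inj Cons.prems by (metis inj_onD)
  moreover have "rhoW d r (deltaW1 d r i z) t = rhoW d r (deltaW1 d r i z') t"
    using Cons closed by (simp add: take_deltaW1)
  ultimately show ?case by (simp add: rhoW_Cons)
qed simp

lemma sdrop_mult_period: "sdrop k s = s \<Longrightarrow> sdrop (c * k) s = s"
  by (induction c) (auto simp flip: sdrop_add)

text \<open>Beyond level N the prefix of length N determines a word of the component. The output
  tables take finitely many values, so two levels m1 < m2 that are multiples of the period have
  the same table; cancelling the action of the first m1 letters shows that the block between them
  acts trivially.\<close>
lemma periodic_stream_power_acts_trivially:
  fixes d :: "'a::finite \<Rightarrow> 'q::finite \<Rightarrow> 'q" and s :: "'q stream"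
  assumes "reversible d" "invertible r" "0 < k" "sdrop k s = s"
    and label: "\<forall>n\<ge>N. label (stream_branch d r s n) = 1"
  shows "\<exists>D>0. \<forall>t. rhoW d r (stake (D * k) s) t = t"
proof -
  let ?O = "\<lambda>m. comp d r (stake m s)"
  have stable: "\<forall>n\<ge>N. card (?O (Suc n)) = card (?O n)"
    using label card_comp_stake_eq_if_label_eq_1 by blast
  let ?T = "\<lambda>j. output_table d r N (?O ((N + j) * k))"
  have "range ?T \<subseteq> Pow ({w. length w \<le> N} \<times> UNIV)"
    unfolding output_table_def by auto
  moreover have "finite ({w :: 'q list. length w \<le> N} \<times> (UNIV :: ('a \<Rightarrow> 'a) set))"
    using finite_lists_length_le[of "UNIV :: 'q set" N] by simp
  ultimately obtain j1 j2 where j: "j1 < j2" "?T j1 = ?T j2"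
    using nat_seq_finite_range_repeats[of ?T] finite_subset[OF _ finite_Pow_iff[THEN iffD2]] by blast
  define m1 m2 where "m1 = (N + j1) * k" and "m2 = (N + j2) * k"
  define X where "X = stake ((j2 - j1) * k) s"
  have "m2 = (j2 - j1) * k + m1" using j(1) by (simp add: m1_def m2_def algebra_simps)
  then have z2: "stake m2 s = X @ stake m1 s"
    using stake_add[of "(j2 - j1) * k" s m1] sdrop_mult_period[OF assms(4)] by (simp add: X_def)
  have "N \<le> (N + j) * k" for j
    using assms(3) by (cases k) auto
  then have N: "N \<le> m1" "N \<le> m2" by (simp_all add: m1_def m2_def)
  have "rhoW d r (stake m1 s) t = rhoW d r (stake m2 s) t" for t
  proof (rule rhoW_eq_if_output_table_subset)
    show "inj_on (take N) (?O m1)" using inj_on_take_comp_stake[OF assms(1) stable N(1)] .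
    show "output_table d r N (?O m2) \<subseteq> output_table d r N (?O m1)"
      using j(2) by (simp add: m1_def m2_def)
    show "take N (stake m1 s) = take N (stake m2 s)" using N by (simp add: take_stake min_def)
  qed (simp_all add: comp_closed_deltaW1 comp_self)
  then have "rhoW d r (stake m1 s) (rhoW d r X t) = rhoW d r (stake m1 s) t" for t
    by (simp add: z2 rhoW_append)
  then have "rhoW d r X t = t" for t using inj_rhoW[OF assms(2)] by (meson injD)
  then show ?thesis using j(1) X_def by (intro exI[of _ "j2 - j1"]) auto
qed

lemma power_acts_trivially:
  fixes d :: "'a::finite \<Rightarrow> 'q::finite \<Rightarrow> 'q"
  assumes "reversible d" "invertible r" "w \<noteq> []"
    and "\<not> (\<exists>B. is_branch d r B \<and> active B \<and> self_liftable d r (range B))"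
  shows "\<exists>D>0. \<forall>t. rhoW d r (concat (replicate D w)) t = t"
proof -
  have period: "sdrop (length w) (cycle w) = cycle w" using assms(3) by simp
  have "self_liftable d r (range (stream_branch d r (cycle w)))"
    using assms(3) by (intro self_liftable_stream_branch[OF _ period]) simp
  then have "\<not> active (stream_branch d r (cycle w))"
    using assms(4) is_branch_stream_branch by blast
  then obtain N where "\<forall>n\<ge>N. label (stream_branch d r (cycle w) n) = 1"
    unfolding active_def by blast
  from periodic_stream_power_acts_trivially[OF assms(1,2) _ period this]
  show ?thesis using assms(3) by simp
qed

section \<open>Jungle words\<close>

lemma length_rep_path [simp]: "length (rep_path d r w) = length w"
  by (simp add: rep_path_def)

lemma rep_path_snoc:
  "rep_path d r (w @ [x]) = rep_path d r w @ [(comp d r w, comp d r (w @ [x]))]"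
  unfolding rep_path_def by simp

lemma rep_path_nth:
  "k < length w \<Longrightarrow> rep_path d r w ! k = (comp d r (take k w), comp d r (take (Suc k) w))"
  by (simp add: rep_path_def)

lemma initial_path_butlast:
  assumes "initial_path d r (p @ [f])" "p \<noteq> []"
  shows "initial_path d r p" "snd (last p) = fst f"
proof -
  have "is_path d r (p @ [f])" using assms(1) unfolding initial_path_def by blast
  then have "is_path d r p" and "snd ((p @ [f]) ! (length p - 1)) = fst ((p @ [f]) ! length p)"
    unfolding is_path_def using assms(2) by (auto simp: nth_append)
  then show "initial_path d r p" "snd (last p) = fst f"
    using assms unfolding initial_path_def by (auto simp: nth_append last_conv_nth)
qed

lemma initial_path_eq_rep_path:
  assumes "initial_path d r p" "p \<noteq> []" "w \<in> snd (last p)"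
  shows "p = rep_path d r w"
  using assms
proof (induction p arbitrary: w rule: rev_induct)
  case (snoc f p)
  obtain u x where f: "f = (comp d r u, comp d r (u @ [x]))"
    using snoc.prems(1) unfolding initial_path_def is_path_def is_edge_def by auto
  have w: "w \<in> comp d r (u @ [x])" using snoc.prems(3) f by simp
  then have len_w: "length w = Suc (length u)" by (auto dest: comp_length)
  then have w_snoc: "w = take (length u) w @ [w ! length u]"
    by (metis lessI take_Suc_conv_app_nth take_all order_refl)
  have comp_prefix: "comp d r (take (length u) w) = comp d r u"
    using comp_eq[OF comp_take[OF w]] .
  have comp_w: "comp d r w = comp d r (u @ [x])" using comp_eq[OF w] .
  show ?case
  proof (cases "p = []")
    case True
    then have "u \<in> root" using snoc.prems(1) f comp_self unfolding initial_path_def by auto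
    then have "u = []" by (simp add: root_def)
    then show ?thesis using True f len_w comp_w
      by (simp add: rep_path_def comp_Nil take_Suc_conv_app_nth)
  next
    case False
    note p = initial_path_butlast[OF snoc.prems(1) False]
    have "take (length u) w \<in> snd (last p)"
      using comp_take[OF w] p(2) f by simp
    then have "p = rep_path d r (take (length u) w)" using snoc.IH p(1) False by blast
    then show ?thesis
      using f comp_prefix comp_w rep_path_snoc[of d r "take (length u) w" "w ! length u"]
      by (simp flip: w_snoc)
  qed
qed simp

lemma stems_nonempty:
  assumes "initial_path d r e" "e \<noteq> []"
  shows "stems e \<noteq> {}"
proof -
  obtain u x where "last e = (comp d r u, comp d r (u @ [x]))"
    using assms unfolding initial_path_def is_path_def is_edge_def by (meson last_in_set)
  then show ?thesis using comp_self unfolding stems_def by (metis empty_iff snd_conv)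
qed

lemma stem_rep_path:
  assumes "initial_path d r e" "e \<noteq> []" "v \<in> stems e"
  shows "e = rep_path d r v" "length v = length e" "comp d r v = stems e"
proof -
  show e: "e = rep_path d r v"
    using initial_path_eq_rep_path assms unfolding stems_def by blast
  then show "length v = length e" by simp
  then have "length v - 1 < length v" "Suc (length v - 1) = length v" using assms(2) by auto
  then have "last e = (comp d r (take (length v - 1) v), comp d r v)"
    using e assms(2) rep_path_nth[of "length v - 1" v d r] by (simp add: last_conv_nth)
  then show "comp d r v = stems e" by (simp add: stems_def)
qed

lemma descends_comp_take:
  assumes "m \<le> k" "k \<le> length W"
  shows "descends d r (comp d r (take m W)) (comp d r (take k W))"
  using assms
proof (induction k rule: dec_induct)
  case (step k)
  have "is_edge d r (comp d r (take k W), comp d r (take (Suc k) W))"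
    unfolding is_edge_def using step.prems by (metis Suc_le_lessD take_Suc_conv_app_nth)
  with step show ?case unfolding descends_def by (simp add: rtrancl_into_rtrancl)
qed (simp add: descends_def)

definition windows_in :: "nat \<Rightarrow> 'b list set \<Rightarrow> 'b list \<Rightarrow> bool" where
  "windows_in n V W \<longleftrightarrow> (\<forall>j. j + n \<le> length W \<longrightarrow> take n (drop j W) \<in> V)"

lemma windows_inD: "windows_in n V W \<Longrightarrow> j + n \<le> length W \<Longrightarrow> take n (drop j W) \<in> V"
  unfolding windows_in_def by blast

lemma windows_in_take: "windows_in n V W \<Longrightarrow> windows_in n V (take m W)"
  unfolding windows_in_def by (auto simp: take_drop min_def)

lemma windows_in_drop: "windows_in n V W \<Longrightarrow> windows_in n V (drop m W)"
  unfolding windows_in_def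
proof (intro allI impI)
  fix j assume win: "\<forall>j. j + n \<le> length W \<longrightarrow> take n (drop j W) \<in> V"
    and j: "j + n \<le> length (drop m W)"
  show "take n (drop j (drop m W)) \<in> V"
  proof (cases "m \<le> length W")
    case True
    then show ?thesis using win[rule_format, of "m + j"] j by (simp add: add.commute)
  next
    case False
    then show ?thesis using win[rule_format, of 0] j by simp
  qed
qed

lemma jungle_tree_edge_stem_suffix:
  assumes e: "initial_path d r e" "e \<noteq> []"
    and f: "(comp d r (take k W), comp d r (take (Suc k) W)) \<in> jungle_tree d r e"
    and k: "k < length W" "length e \<le> Suc k"
  shows "\<exists>s t. take (Suc k) W = s @ t \<and> t \<in> stems e"
proof (cases "(comp d r (take k W), comp d r (take (Suc k) W)) \<in> set e")
  case True
  obtain v where v: "v \<in> stems e" using stems_nonempty[OF e] by blast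
  note v_rep = stem_rep_path[OF e v]
  obtain m where m: "m < length e" "e ! m = (comp d r (take k W), comp d r (take (Suc k) W))"
    using True by (auto simp: in_set_conv_nth)
  moreover have "m < length v" using m(1) v_rep(2) by simp
  ultimately have f_m: "comp d r (take m v) = comp d r (take k W)"
      "comp d r (take (Suc m) v) = comp d r (take (Suc k) W)"
    using rep_path_nth[of m v d r] v_rep(1) by simp_all
  then have "length (take k W) = length (take m v)" using comp_self[of "take k W"] comp_length
    by blast
  then have "take (Suc m) v = v" using m(1) v_rep(2) k by simp
  then have "take (Suc k) W \<in> stems e" using f_m(2) comp_self[of "take (Suc k) W"] v_rep(3)
    by simp
  then show ?thesis by blast
next
  case False
  then have "liftable (comp d r (take k W), comp d r (take (Suc k) W)) (last e)"
    using f unfolding jungle_tree_def by blast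
  moreover have "take (Suc k) W \<in> comp d r (take (Suc k) W)" by (rule comp_self)
  ultimately show ?thesis unfolding liftable_def stems_def snd_conv by blast
qed

lemma windows_in_if_jword:
  assumes e: "initial_path d r e" "e \<noteq> []" and jw: "jword d r e W"
  shows "windows_in (length e) (stems e) W"
  unfolding windows_in_def
proof (intro allI impI)
  let ?n = "length e"
  fix j assume j: "j + ?n \<le> length W"
  define k where "k = j + ?n - 1"
  have "0 < ?n" using e(2) by simp
  then have k: "k < length W" "Suc k = j + ?n" using j unfolding k_def by linarith+
  have "rep_path d r W ! k \<in> jungle_tree d r e"
    using jw k(1) unfolding jword_def by (metis length_rep_path nth_mem subsetD)
  then have "(comp d r (take k W), comp d r (take (Suc k) W)) \<in> jungle_tree d r e"
    by (simp only: rep_path_nth[OF k(1)])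
  then obtain s t where st: "take (j + ?n) W = s @ t" "t \<in> stems e"
    using jungle_tree_edge_stem_suffix[OF e _ k(1)] k(2) by auto
  have "length t = ?n" using stem_rep_path(2)[OF e st(2)] .
  moreover have "length (take (j + ?n) W) = j + ?n" using j by simp
  ultimately have "drop j (take (j + ?n) W) = t" using st(1) by (simp add: append_eq_conv_conj)
  then show "take ?n (drop j W) \<in> stems e" using st(2) by (simp add: take_drop add.commute)
qed

lemma liftable_if_windows_in:
  assumes e: "initial_path d r e" "e \<noteq> []" and win: "windows_in (length e) (stems e) W"
    and k: "length e \<le> Suc k" "Suc k \<le> length W"
  shows "liftable (comp d r (take k W), comp d r (take (Suc k) W)) (last e)"
  unfolding liftable_def snd_conv
proof
  let ?n = "length e"
  fix z assume z: "z \<in> comp d r (take (Suc k) W)"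
  define i where "i = Suc k - ?n"
  have i: "take (Suc k) W = take i W @ take ?n (drop i W)" "length (take i W) = i"
    using k by (simp_all add: i_def take_add[symmetric])
  then have "drop i z \<in> comp d r (take ?n (drop i W))"
    using comp_drop[of z d r "take i W"] z by simp
  moreover have "take ?n (drop i W) \<in> stems e" using windows_inD[OF win] k by (simp add: i_def)
  ultimately have "drop i z \<in> stems e" using stem_rep_path(3)[OF e] by simp
  then show "\<exists>s t. z = s @ t \<and> t \<in> snd (last e)"
    unfolding stems_def by (intro exI[of _ "take i z"] exI[of _ "drop i z"]) simp
qed

lemma jword_if_windows_in:
  assumes e: "initial_path d r e" "e \<noteq> []" and len: "length e \<le> length W"
    and win: "windows_in (length e) (stems e) W"
  shows "jword d r e W"
  unfolding jword_def
proof
  let ?n = "length e"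
  define v where "v = take ?n W"
  have v: "v \<in> stems e" using windows_inD[OF win, of 0] len by (simp add: v_def)
  note v_rep = stem_rep_path[OF e v]
  fix f assume "f \<in> set (rep_path d r W)"
  then obtain k where k: "k < length W" "f = (comp d r (take k W), comp d r (take (Suc k) W))"
    unfolding in_set_conv_nth by (auto simp: rep_path_nth)
  show "f \<in> jungle_tree d r e"
  proof (cases "k < ?n")
    case True
    moreover have "k < length v" using True v_rep(2) by simp
    ultimately have "e ! k = (comp d r (take k v), comp d r (take (Suc k) v))"
      using rep_path_nth[of k v d r] by (simp only: v_rep(1)[symmetric])
    then have "f = e ! k" using True k(2) by (simp add: v_def min_def)
    then show ?thesis using True unfolding jungle_tree_def by simp
  next
    case False
    have "f = (comp d r (take k W), comp d r (take k W @ [W ! k]))"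
      using k by (simp add: take_Suc_conv_app_nth)
    then have "is_edge d r f" unfolding is_edge_def by blast
    moreover have "descends d r (stems e) (fst f)"
      using descends_comp_take[of ?n k W d r] False k v_rep(3) by (simp add: v_def)
    moreover have "liftable f (last e)"
      using liftable_if_windows_in[OF e win] False k by simp
    ultimately show ?thesis unfolding jungle_tree_def stems_def by simp
  qed
qed

lemma jword_iff_windows_in:
  assumes "initial_path d r e" "e \<noteq> []" "length e \<le> length W"
  shows "jword d r e W \<longleftrightarrow> windows_in (length e) (stems e) W"
  using windows_in_if_jword jword_if_windows_in assms by blast

section \<open>Walks between stems\<close>

definition walk :: "nat \<Rightarrow> 'b list set \<Rightarrow> 'b list \<Rightarrow> 'b list \<Rightarrow> 'b list \<Rightarrow> bool" where
  "walk n V x T y \<longleftrightarrow> y \<in> V \<and> windows_in n V (T @ y) \<and> take n (T @ y) = x"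

lemma walk_Nil:
  assumes "length x = n" "x \<in> V" shows "walk n V x [] x"
  using assms unfolding walk_def windows_in_def by auto

lemma take_append_eq_if_take_eq: "take n W = y \<Longrightarrow> take n (T @ W) = take n (T @ y)"
  by (auto simp: min_def)

lemma windows_in_glue:
  assumes "windows_in n V (T @ y)" "windows_in n V W" "take n W = y" "length y = n"
  shows "windows_in n V (T @ W)"
  unfolding windows_in_def
proof (intro allI impI)
  fix j assume j: "j + n \<le> length (T @ W)"
  show "take n (drop j (T @ W)) \<in> V"
  proof (cases "length T \<le> j")
    case True
    then show ?thesis using windows_inD[OF assms(2), of "j - length T"] j by simp
  next
    case False
    then have "take n (drop j (T @ W)) = take n (drop j T @ W)" by simp
    also have "\<dots> = take n (drop j T @ y)" using assms(3) by (rule take_append_eq_if_take_eq)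
    also have "\<dots> = take n (drop j (T @ y))" using False by simp
    finally show ?thesis using windows_inD[OF assms(1), of j] False assms(4) by simp
  qed
qed

lemma walk_append:
  assumes "walk n V x T y" "walk n V y T' z" "length y = n"
  shows "walk n V x (T @ T') z"
proof -
  have "take n (T' @ z) = y" "windows_in n V (T' @ z)" using assms(2) unfolding walk_def by auto
  then show ?thesis
    using assms(1,2) windows_in_glue[of n V T y "T' @ z"] take_append_eq_if_take_eq[of n "T' @ z" y T]
    unfolding walk_def by (simp add: assms(3))
qed

lemma walk_snocD:
  assumes "walk n V x (T @ [c]) y" "length y = n"
  shows "walk n V x T (take n (c # y))" "windows_in n V (c # y)"
proof -
  let ?W = "T @ c # y"
  have W: "windows_in n V ?W" "take n ?W = x" using assms(1) unfolding walk_def by auto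
  have "take (length T + n) ?W = T @ take n (c # y)" by simp
  moreover have "take n (take (length T + n) ?W) = take n ?W" by (simp add: min_def)
  ultimately show "walk n V x T (take n (c # y))"
    using W windows_in_take[OF W(1), of "length T + n"] windows_inD[OF W(1), of "length T"] assms(2)
    unfolding walk_def by simp
  show "windows_in n V (c # y)" using windows_in_drop[OF W(1), of "length T"] by simp
qed

lemma walk_single:
  assumes "windows_in n V z" "length z = Suc n"
  shows "walk n V (take n z) [hd z] (drop 1 z)"
proof -
  have "[hd z] @ drop 1 z = z" using assms(2) by (cases z) auto
  moreover have "drop 1 z \<in> V" using windows_inD[OF assms(1), of 1] assms(2) by simp
  ultimately show ?thesis using assms(1) unfolding walk_def by simp
qed

lemma walk_power:
  assumes "walk n V u L u" "walk n V u L v" "length u = n" "0 < k"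
  shows "walk n V u (concat (replicate k L)) v"
  using assms(4)
proof (induction k rule: nat_induct_non_zero)
  case (Suc k)
  from walk_append[OF assms(1) Suc.IH assms(3)] show ?case by simp
qed (use assms(2) in simp)

lemma walk_if_rtrancl:
  assumes "\<And>v. v \<in> V \<Longrightarrow> length v = n" "x \<in> V"
    and "S \<subseteq> {(x, y). \<exists>T. walk n V x T y}" "(x, y) \<in> S\<^sup>*"
  shows "\<exists>T. walk n V x T y"
  using assms(4)
proof (induction rule: rtrancl_induct)
  case base
  show ?case using walk_Nil assms(1,2) by blast
next
  case (step y z)
  then obtain T T' where "walk n V x T y" "walk n V y T' z" using assms(3) by blast
  then show ?case using walk_append assms(1) unfolding walk_def by blast
qed

context
  fixes d :: "'a::finite \<Rightarrow> 'q::finite \<Rightarrow> 'q" and r :: "'q \<Rightarrow> 'a \<Rightarrow> 'a"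
    and e :: "'q edge list"
  assumes rev: "reversible d" and inv: "invertible r" and jungle: "jungle_path d r e"
begin

lemma jungle_initial_path: "initial_path d r e" "e \<noteq> []"
  using jungle unfolding jungle_path_def by auto

lemma length_stem: "v \<in> stems e \<Longrightarrow> length v = length e"
  using stem_rep_path(2)[OF jungle_initial_path] .

lemma comp_stem: "v \<in> stems e \<Longrightarrow> comp d r v = stems e"
  using stem_rep_path(3)[OF jungle_initial_path] .

lemma jword_iff_windows_in_stems:
  "length e \<le> length W \<Longrightarrow> jword d r e W \<longleftrightarrow> windows_in (length e) (stems e) W"
  using jword_iff_windows_in[OF jungle_initial_path] .

lemma windows_in_comp_window:
  assumes "windows_in (length e) (stems e) z" "length z = Suc (length e)" "w \<in> comp d r z"
  shows "windows_in (length e) (stems e) w"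
proof -
  let ?n = "length e"
  have "take ?n z \<in> stems e" "drop 1 z \<in> stems e"
    using windows_inD[OF assms(1), of 0] windows_inD[OF assms(1), of 1] assms(2) by simp_all
  moreover have "take ?n w \<in> comp d r (take ?n z)" "drop 1 w \<in> comp d r (drop 1 z)"
    using comp_take[of w d r "take ?n z" "drop ?n z"] comp_drop[of w d r "take 1 z" "drop 1 z"]
      assms(2,3) by simp_all
  ultimately have "take ?n w \<in> stems e" "drop 1 w \<in> stems e" using comp_stem by simp_all
  moreover have "length w = Suc ?n" using comp_length[OF assms(3)] assms(2) by simp
  ultimately show ?thesis unfolding windows_in_def by (auto simp: le_Suc_eq)
qed

text \<open>The component of z is a legitimate child of the last edge of e, hence labelled 1.\<close>
lemma card_comp_window:
  assumes "windows_in (length e) (stems e) z" "length z = Suc (length e)"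
  shows "card (comp d r z) = card (stems e)"
proof -
  let ?n = "length e"
  have a: "take ?n z \<in> stems e" using windows_inD[OF assms(1), of 0] assms(2) by simp
  have z: "z = take ?n z @ [z ! ?n]" using assms(2) by (simp add: take_Suc_conv_app_nth[symmetric])
  have edge: "is_edge d r (stems e, comp d r z)"
    unfolding is_edge_def using comp_stem[OF a] z by metis
  moreover have "liftable (stems e, comp d r z) (last e)"
    unfolding liftable_def stems_def
  proof
    fix w assume "w \<in> snd (snd (last e), comp d r z)"
    then have w: "w \<in> comp d r z" by simp
    then have "length w = Suc ?n" using comp_length assms(2) by metis
    then have "drop 1 w \<in> stems e"
      using windows_inD[OF windows_in_comp_window[OF assms w], of 1] by simp
    then show "\<exists>s t. w = s @ t \<and> t \<in> snd (last e)"
      unfolding stems_def by (intro exI[of _ "take 1 w"] exI[of _ "drop 1 w"]) simp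
  qed
  ultimately have "legit_child d r (last e) (stems e, comp d r z)"
    unfolding legit_child_def stems_def by simp
  then have "label (stems e, comp d r z) = 1" using jungle unfolding jungle_path_def by blast
  from card_eq_if_label_eq_1[OF edge this] show ?thesis by simp
qed

text \<open>The prefix and the suffix of length n map the component of z bijectively onto the stems,
  so the one-letter steps inside it form a permutation of the stems and can be undone.\<close>
lemma walk_converse_single:
  assumes "windows_in (length e) (stems e) z" "length z = Suc (length e)"
  shows "\<exists>T. walk (length e) (stems e) (drop 1 z) T (take (length e) z)"
proof -
  let ?n = "length e" and ?D = "comp d r z" and ?V = "stems e"
  have a: "take ?n z \<in> ?V" and b: "drop 1 z \<in> ?V"
    using windows_inD[OF assms(1), of 0] windows_inD[OF assms(1), of 1] assms(2) by simp_all
  have "take ?n ` ?D = ?V"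
    using take_image_comp[OF rev, where u="take ?n z" and r=r and v="drop ?n z"] comp_stem[OF a]
      assms(2) by simp
  then have take_bij: "bij_betw (take ?n) ?D ?V"
    using card_comp_window[OF assms] by (intro bij_betw_image_card_eq) (simp_all add: comp_finite)
  have "drop 1 ` ?D = ?V"
    using drop_image_comp[OF rev inv, where u="take 1 z" and v="drop 1 z"] comp_stem[OF b]
      assms(2) by simp
  then have drop_bij: "bij_betw (drop 1) ?D ?V"
    using card_comp_window[OF assms] by (intro bij_betw_image_card_eq) (simp_all add: comp_finite)
  have "{(take ?n w, drop 1 w) | w. w \<in> ?D} \<subseteq> {(x, y). \<exists>T. walk ?n ?V x T y}"
    using walk_single windows_in_comp_window[OF assms] comp_length assms(2) by fastforce
  with bij_betw_pair_graph_return[OF take_bij drop_bij comp_finite comp_self]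
  show ?thesis using walk_if_rtrancl[of ?V ?n] length_stem b by blast
qed

lemma walk_sym:
  assumes "walk (length e) (stems e) x T y"
  shows "\<exists>T'. walk (length e) (stems e) y T' x"
  using assms
proof (induction T arbitrary: y rule: rev_induct)
  case Nil
  then have "y \<in> stems e" "x = y" using length_stem unfolding walk_def by auto
  then show ?case using walk_Nil length_stem by blast
next
  case (snoc c T)
  let ?n = "length e" and ?y' = "take (length e) (c # y)"
  have y: "y \<in> stems e" using snoc.prems unfolding walk_def by blast
  note split = walk_snocD[OF snoc.prems length_stem[OF y]]
  obtain T1 where T1: "walk ?n (stems e) ?y' T1 x" using snoc.IH[OF split(1)] by blast
  obtain T2 where "walk ?n (stems e) (drop 1 (c # y)) T2 ?y'"
    using walk_converse_single[OF split(2)] length_stem[OF y] by auto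
  then have "walk ?n (stems e) y T2 ?y'" by simp
  from walk_append[OF this T1] show ?case using split(1) length_stem unfolding walk_def by blast
qed

lemma jsim_if_walk:
  assumes "walk (length e) (stems e) u X v" "length e \<le> length X" "\<forall>t. rhoW d r X t = t"
  shows "jsim d r e u v"
proof -
  have "take (length e) X = u" using assms(1,2) unfolding walk_def by simp
  then have X: "X = u @ drop (length e) X" by (metis append_take_drop_id)
  have "jword d r e (X @ v)"
    using assms(1,2) jword_iff_windows_in_stems unfolding walk_def by simp
  then have "jword d r e (u @ drop (length e) X @ v)" by (subst (asm) X) simp
  moreover have "\<forall>t. rhoW d r (u @ drop (length e) X) t = t" using assms(3) X by metis
  ultimately show ?thesis unfolding jsim_def by blast
qed

lemma walk_if_jword:
  assumes "x \<in> stems e" "y \<in> stems e" "jword d r e (x @ y)"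
  shows "walk (length e) (stems e) x x y"
  using assms jword_iff_windows_in_stems[of "x @ y"] length_stem unfolding walk_def by simp

text \<open>Both stems are reached from u by walks through the common stem s; some power of the
  closed walk around u acts trivially.\<close>
lemma jsim_if_jwedge0:
  assumes no_branch: "\<not> (\<exists>B. is_branch d r B \<and> active B \<and> self_liftable d r (range B))"
    and "jwedge0 d r e u v"
  shows "jsim d r e u v"
proof -
  let ?n = "length e" and ?V = "stems e"
  obtain s where s: "u \<in> ?V" "v \<in> ?V" "s \<in> ?V" "jword d r e (s @ u)" "jword d r e (s @ v)"
    using assms(2) unfolding jwedge0_def by blast
  have su: "walk ?n ?V s s u" and sv: "walk ?n ?V s s v" using s walk_if_jword by auto
  obtain T where "walk ?n ?V u T s" using walk_sym[OF su] by blast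
  then have loop: "walk ?n ?V u (T @ s) u" and uv: "walk ?n ?V u (T @ s) v"
    using walk_append su sv length_stem[OF s(3)] by blast+
  have "T @ s \<noteq> []" using length_stem[OF s(3)] jungle_initial_path(2) by auto
  then obtain D where D: "D > 0" "\<forall>t. rhoW d r (concat (replicate D (T @ s))) t = t"
    using power_acts_trivially[OF rev inv _ no_branch] by blast
  have "walk ?n ?V u (concat (replicate D (T @ s))) v"
    using walk_power[OF loop uv length_stem[OF s(1)] D(1)] .
  moreover have "?n \<le> length (concat (replicate D (T @ s)))"
    using D(1) length_stem[OF s(3)] by (cases D) auto
  ultimately show ?thesis using jsim_if_walk D(2) by blast
qed

lemma jsim_trans:
  assumes "x \<in> stems e" "y \<in> stems e" "z \<in> stems e" "jsim d r e x y" "jsim d r e y z"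
  shows "jsim d r e x z"
proof -
  obtain s1 where s1: "jword d r e (x @ s1 @ y)" "\<forall>t. rhoW d r (x @ s1) t = t"
    using assms(4) unfolding jsim_def by blast
  obtain s2 where s2: "jword d r e (y @ s2 @ z)" "\<forall>t. rhoW d r (y @ s2) t = t"
    using assms(5) unfolding jsim_def by blast
  have "walk (length e) (stems e) x (x @ s1) y" "walk (length e) (stems e) y (y @ s2) z"
    using s1(1) s2(1) assms(1-3) length_stem jword_iff_windows_in_stems unfolding walk_def by auto
  then have "walk (length e) (stems e) x ((x @ s1) @ (y @ s2)) z"
    using walk_append length_stem[OF assms(2)] by blast
  moreover have "\<forall>t. rhoW d r ((x @ s1) @ (y @ s2)) t = t" using s1(2) s2(2) by (simp add: rhoW_append)
  ultimately show ?thesis using jsim_if_walk length_stem[OF assms(1)] by simp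
qed

end

theorem lemma5p15:
  fixes d :: "'a::finite \<Rightarrow> 'q::finite \<Rightarrow> 'q"
    and r :: "'q \<Rightarrow> 'a \<Rightarrow> 'a"
    and e :: "'q edge list"
    and u v :: "'q list"
  assumes "aut_connected d"
    and "bireversible d r"
    and "\<not> (\<exists>B. is_branch d r B \<and> active B \<and> self_liftable d r (range B))"
    and "jungle_path d r e"
    and "u \<in> stems e" and "v \<in> stems e"
    and "jwedge d r e u v"
  shows "jsim d r e u v"
proof -
  have rev: "reversible d" and inv: "invertible r"
    using assms(2) unfolding bireversible_def by auto
  have "(jwedge0 d r e)\<^sup>+\<^sup>+ u v" using assms(7) unfolding jwedge_def .
  then show ?thesis
  proof (induction rule: tranclp_induct)
    case (base y)
    then show ?case using jsim_if_jwedge0[OF rev inv assms(4,3)] by blast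
  next
    case (step y z)
    then have "y \<in> stems e" "z \<in> stems e" unfolding jwedge0_def by auto
    with step show ?case
      using jsim_trans[OF rev inv assms(4) assms(5)] jsim_if_jwedge0[OF rev inv assms(4,3)] by blast
  qed
qed

end
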